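(* Fix $m\ge 0$. Define differential polynomials $\mathscr{P}^{(k)}_{n[m]}$ for $n\ge m+1$ by $\mathscr{P}^{(k)}_{(m+1)[m]}=Q_+$ and, for $n\ge m+2$, $$\mathscr{P}^{(k)}_{n[m]}=(k+n-1)\,\partial\mathscr{P}^{(k+1)}_{(n-1)[m]}+:\Big(Q_++\sum_{i=1}^{n-m-1}A_i\Big)\mathscr{P}^{(k+1)}_{(n-1)[m]}:.$$ Then for $n\ge m+1$ the field $\mathcal{F}^{(k)}_{n[m]}=(-1)^{m+1}:\mathscr{P}^{(k)}_{n[m]}e^{-\Xi}:$ lies in $\mathcal{W}_{n[m]}(k)$, i.e. commutes with the screenings $E_i$ ($1\le i\le n-m-1$), $\Psi_+$, $\Psi_-$ and $E_{-i}$ ($1\le i\le m-1$) of the $n[m]$ realization. In particular $\mathscr{P}^{(k)}_{n[m]}$ depends only on $A_{n-m-1},\dots,A_1,Q_+$.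
   Context: Setup. Fix integers $n\ge 2$ and $0\le m\le n$, a generic complex number $k$ (in particular $k\neq -n$), and put $K=k+n$. Let $\varphi=(\varphi_1,\dots,\varphi_{n+1})$ be free scalar fields with OPE $\partial\varphi_i(z)\partial\varphi_j(w)\sim\delta_{ij}(z-w)^{-2}$, and let $(\,,\,)$ be the standard symmetric bilinear form on $\mathbb{C}^{n+1}$. Choose vectors $a_i$ ($1\le i\le n-m-1$), $a_{-i}$ ($1\le i\le m-1$), $\psi_+$ (present iff $m\le n-1$), $\psi_-$ (present iff $m\ge 1$), and $\xi$ in $\mathbb{C}^{n+1}$ whose nonzero pairwise products are: $(a_j,a_j)=2K$ for every $a_j$ present; $(a_i,a_{i+1})=-K$ for $1\le i\le n-m-2$; $(a_{-i},a_{-i-1})=-K$ for $1\le i\le m-2$; $(a_1,\psi_+)=-K$; $(a_{-1},\psi_-)=-K$; $(\psi_\pm,\psi_\pm)=1$; $(\psi_+,\psi_-)=K-1$; $(\psi_+,\xi)=1$; $(\psi_-,\xi)=-1$; all other products (including $(\xi,\xi)$ and $(a_j,\xi)$) vanish. Define currents $A_j=(a_j,\partial\varphi)$, $Q_\pm=(\psi_\pm,\partial\varphi)$, $Y=(\xi,\partial\varphi)$ and the field $\Xi=(\xi,\varphi)$. The screening operators are $E_j=\oint e^{(a_j,\varphi)}$ for each $a_j$ present and $\Psi_\pm=\oint e^{(\psi_\pm,\varphi)}$ for each $\psi_\pm$ present. Let $\mathcal{V}_\xi$ be the space of fields $:P(\partial\varphi)e^{p\Xi}:$, $p\in\mathbb{Z}$,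 with $P$ a normal-ordered differential polynomial in the components of $\partial\varphi$. A field $X(w)$ commutes with a screening $\oint s(z)\,dz$ if the residue at $z=w$ of the OPE $s(z)X(w)$ vanishes. The vertex algebra $\mathcal{W}_{n[m]}(k)$ is the centralizer in $\mathcal{V}_\xi$ of all these screenings. Since $K=k+n$ is unchanged under $(n,k)\mapsto(n-1,k+1)$, the vectors/currents of the $(n-1)[m]$ realization at level $k+1$ are identified with the corresponding subset of those of the $n[m]$ realization at level $k$. *)

theory Defs
  imports "HOL-Complex_Analysis.Complex_Analysis"
begin

text \<open>Vectors of C^(N+1) are functions nat => complex; only components 0..N matter.\<close>
type_synonym vec = "nat \<Rightarrow> complex"

definition bil :: "nat \<Rightarrow> vec \<Rightarrow> vec \<Rightarrow> complex" where
  "bil N u v = (\<Sum>i\<le>N. u i * v i)"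

text \<open>Normal-ordered differential polynomials in the components of the derivative of phi.
  DVar i j stands for the (j+1)-st derivative of phi_i.\<close>
datatype dpoly = DConst complex | DVar nat nat | DAdd dpoly dpoly | DMul dpoly dpoly

fun dderiv :: "dpoly \<Rightarrow> dpoly" where
  "dderiv (DConst c) = DConst 0"
| "dderiv (DVar i j) = DVar i (Suc j)"
| "dderiv (DAdd p q) = DAdd (dderiv p) (dderiv q)"
| "dderiv (DMul p q) = DAdd (DMul (dderiv p) q) (DMul p (dderiv q))"

fun deval :: "(nat \<Rightarrow> nat \<Rightarrow> complex) \<Rightarrow> dpoly \<Rightarrow> complex" where
  "deval x (DConst c) = c"
| "deval x (DVar i j) = x i j"
| "deval x (DAdd p q) = deval x p + deval x q"
| "deval x (DMul p q) = deval x p * deval x q"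

definition dsum :: "dpoly list \<Rightarrow> dpoly" where
  "dsum ps = foldr DAdd ps (DConst 0)"

definition current :: "nat \<Rightarrow> vec \<Rightarrow> dpoly" where
  "current N a = dsum (map (\<lambda>i. DMul (DConst (a i)) (DVar i 0)) [0..<Suc N])"

text \<open>The differential polynomials P^(k)_{n[m]}, all expressed in the currents of the
  ambient realization on C^(N+1) (vectors of the (n-1)[m] realization at level k+1 identified
  with the corresponding vectors of the n[m] realization).  Values for n < m+1 are junk.\<close>
fun Pscr :: "nat \<Rightarrow> vec \<Rightarrow> (int \<Rightarrow> vec) \<Rightarrow> nat \<Rightarrow> nat \<Rightarrow> complex \<Rightarrow> dpoly" where
  "Pscr N psip a m 0 k = current N psip"
| "Pscr N psip a m (Suc n) k =
     (if Suc n \<le> Suc m then current N psip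
      else DAdd (DMul (DConst (k + of_nat (Suc n) - 1)) (dderiv (Pscr N psip a m n (k + 1))))
                (DMul (DAdd (current N psip)
                            (dsum (map (\<lambda>i. current N (a (int i))) [1..<Suc n - m])))
                      (Pscr N psip a m n (k + 1))))"

text \<open>A field :P(d phi) e^(p Xi): (represented by P and p) commutes with the screening
  oint e^((s,phi)).  By Wick's theorem the OPE is
  e^((s,phi))(z) :P e^(p Xi):(w) = (z-w)^(p(s,xi)) :e^((s,phi)(z)) P(d^j phi(w) - (j-1)! s (z-w)^(-j)) e^(p Xi(w)):.
  The residue at z=w is a field :R(d phi) e^((s+p xi, phi)):, which vanishes iff the
  differential polynomial R vanishes, i.e. iff its evaluation on the jets of every
  entire vector-valued function f vanishes.  We therefore evaluate the normal ordered
  product classically on f and take the genuine residue.\<close>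
definition commutes :: "nat \<Rightarrow> vec \<Rightarrow> vec \<Rightarrow> dpoly \<Rightarrow> int \<Rightarrow> bool" where
  "commutes N xi s P p \<longleftrightarrow>
     (\<exists>e::int. of_int p * bil N s xi = of_int e \<and>
        (\<forall>f :: nat \<Rightarrow> complex \<Rightarrow> complex. \<forall>w.
           (\<forall>i. f i holomorphic_on UNIV) \<longrightarrow>
           residue (\<lambda>z. (z - w) powi e
                        * exp (\<Sum>i\<le>N. s i * f i z + of_int p * xi i * f i w)
                        * deval (\<lambda>i j. (deriv ^^ Suc j) (f i) w
                                        - fact j * s i / (z - w) ^ Suc j) P) w = 0))"

text \<open>The Gram conditions of the n[m] realization (on C^(n+1)), with K = k + n.
  Screening vectors a_j are indexed by j in J = {1..n-m-1} union {-(m-1)..-1};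
  psi_+ is present iff m < n, psi_- iff 1 <= m.\<close>
definition gram_ok :: "nat \<Rightarrow> nat \<Rightarrow> complex \<Rightarrow> (int \<Rightarrow> vec) \<Rightarrow> vec \<Rightarrow> vec \<Rightarrow> vec \<Rightarrow> bool" where
  "gram_ok n m K a psip psim xi \<longleftrightarrow>
    (let J = {j::int. 1 \<le> j \<and> j \<le> int n - int m - 1} \<union> {j::int. - (int m - 1) \<le> j \<and> j \<le> -1};
         B = bil n in
     (\<forall>i\<in>J. \<forall>j\<in>J. B (a i) (a j) = (if i = j then 2 * K else if \<bar>i - j\<bar> = 1 then - K else 0))
     \<and> (\<forall>j\<in>J. B (a j) xi = 0)
     \<and> B xi xi = 0
     \<and> (m < n \<longrightarrow> B psip psip = 1 \<and> B psip xi = 1 \<and>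
                   (\<forall>j\<in>J. B (a j) psip = (if j = 1 then - K else 0)))
     \<and> (1 \<le> m \<longrightarrow> B psim psim = 1 \<and> B psim xi = -1 \<and>
                   (\<forall>j\<in>J. B (a j) psim = (if j = -1 then - K else 0)))
     \<and> (m < n \<and> 1 \<le> m \<longrightarrow> B psip psim = K - 1))"

end

theory Submission
  imports Defs "HOL-Computational_Algebra.Polynomial"
begin

(* By Wick's theorem the residue in the OPE of the screening e^(s, phi) with :X e^(p Xi): is the
  residue at w of (z - w)^e G(z) C(1/(z - w)), where G(z) = exp (s, f(z)), e = p (s, xi) and C is
  the contraction polynomial of X.  Writing rho_e(X) for this residue, one has
  rho_e(dX) = (rho_e X)' + e rho_(e-1)(X).  Hence for the recursion X_(l+1) = kappa dX_l + :U X_l:,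
  where U is the current of u = psi_+ + a_1 + ... + a_(l+1) and kappa = K - 1 is the same at
  every step,
    rho_e(X_(l+1)) = kappa rho_e(X_l)' + (u, f') rho_e(X_l) + (kappa e - (u, s)) rho_(e-1)(X_l).
  So once rho_e vanishes identically it stays zero as long as (u, s) = kappa e, and the Gram
  relations give exactly this from the start for psi_+ (e = -1), psi_- (e = 1) and a_(-i) (e = 0).
  For a_i (e = 0) the contraction polynomial has no pole before X_(i-1) and a simple pole there;
  a direct computation then gives rho_0(X_i) = 0, and the propagation takes over. *)

definition taylor_coeff :: "(complex \<Rightarrow> complex) \<Rightarrow> complex \<Rightarrow> int \<Rightarrow> complex" where
  "taylor_coeff G w n = (if n < 0 then 0 else (deriv ^^ nat n) G w / fact (nat n))"

lemma taylor_coeff_0 [simp]: "taylor_coeff G w 0 = G w"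
  and taylor_coeff_1 [simp]: "taylor_coeff G w 1 = deriv G w"
  and taylor_coeff_neg [simp]: "n < 0 \<Longrightarrow> taylor_coeff G w n = 0"
  by (simp_all add: taylor_coeff_def)

lemma has_field_derivative_taylor_coeff:
  assumes "G holomorphic_on UNIV"
  shows "((\<lambda>w. taylor_coeff G w n) has_field_derivative
           of_int (n + 1) * taylor_coeff G w (n + 1)) (at w)"
proof (cases "n < 0")
  case True
  then show ?thesis by (cases "n = -1") (simp_all add: taylor_coeff_def)
next
  case False
  then obtain k where k: "n = int k" by (metis nonneg_int_cases not_le)
  have "((\<lambda>w. (deriv ^^ k) G w / fact k) has_field_derivative (deriv ^^ Suc k) G w / fact k) (at w)"
    using assms by (intro DERIV_cdivide has_field_derivative_higher_deriv) auto
  moreover have "(deriv ^^ Suc k) G w / fact k = of_nat (Suc k) * ((deriv ^^ Suc k) G w / fact (Suc k))"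
    by (simp add: divide_simps del: of_nat_Suc)
  ultimately show ?thesis using k by (simp add: taylor_coeff_def nat_add_distrib add.commute)
qed

lemma residue_power_int_mult:
  assumes G: "G holomorphic_on UNIV"
  shows "residue (\<lambda>z. (z - w) powi k * G z) w = taylor_coeff G w (- k - 1)"
proof (cases "k \<ge> 0")
  case True
  then have "(\<lambda>z. (z - w) powi k * G z) holomorphic_on UNIV"
    using G by (intro holomorphic_intros) auto
  then show ?thesis using True by (simp add: residue_holo[of UNIV])
next
  case False
  define n where "n = nat (- k - 1)"
  have kn: "k = - int (Suc n)" using False by (simp add: n_def)
  have "residue (\<lambda>z. (z - w) powi k * G z) w = residue (\<lambda>z. G z / (z - w) ^ Suc n) w"
    by (intro residue_cong always_eventually allI refl)
       (simp only: kn power_int_minus power_int_of_nat divide_inverse mult.commute)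
  also have "\<dots> = (deriv ^^ n) G w / fact n"
    by (rule residue_holomorphic_over_power[OF open_UNIV _ G]) simp
  finally show ?thesis by (simp add: taylor_coeff_def kn)
qed

definition laurent_residue :: "(complex \<Rightarrow> complex) \<Rightarrow> complex \<Rightarrow> int \<Rightarrow> complex poly \<Rightarrow> complex" where
  "laurent_residue G w e p = (\<Sum>q\<le>degree p. coeff p q * taylor_coeff G w (int q - e - 1))"

lemma laurent_residue_eq_sum:
  "degree p \<le> B \<Longrightarrow> laurent_residue G w e p = (\<Sum>q\<le>B. coeff p q * taylor_coeff G w (int q - e - 1))"
  unfolding laurent_residue_def by (rule sum.mono_neutral_left) (auto simp: coeff_eq_0)

lemma laurent_residue_0 [simp]: "laurent_residue G w e 0 = 0"
  by (simp add: laurent_residue_def)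

lemma laurent_residue_add:
  "laurent_residue G w e (p + q) = laurent_residue G w e p + laurent_residue G w e q"
  using degree_add_le_max[of p q]
  by (simp add: laurent_residue_eq_sum[where B = "max (degree p) (degree q)"] sum.distrib algebra_simps)

lemma laurent_residue_smult: "laurent_residue G w e (smult c p) = c * laurent_residue G w e p"
  by (simp add: laurent_residue_eq_sum[where B = "degree p"] sum_distrib_left mult.assoc)

lemma laurent_residue_minus: "laurent_residue G w e (- p) = - laurent_residue G w e p"
  using laurent_residue_smult[of G w e "- 1" p] by simp

lemma laurent_residue_pCons:
  "laurent_residue G w e (pCons a p) = a * taylor_coeff G w (- e - 1) + laurent_residue G w (e - 1) p"
proof -
  have "laurent_residue G w e (pCons a p)
      = (\<Sum>q\<le>Suc (degree p). coeff (pCons a p) q * taylor_coeff G w (int q - e - 1))"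
    using degree_pCons_le by (rule laurent_residue_eq_sum)
  also have "\<dots> = a * taylor_coeff G w (- e - 1)
      + (\<Sum>q\<le>degree p. coeff p q * taylor_coeff G w (int q - (e - 1) - 1))"
    by (simp only: sum.atMost_Suc_shift coeff_pCons_0 coeff_pCons_Suc) (simp add: algebra_simps)
  finally show ?thesis by (simp add: laurent_residue_def)
qed

lemma laurent_residue_pderiv:
  "laurent_residue G w e (pderiv p)
     = (\<Sum>q\<le>degree p. of_nat q * coeff p q * taylor_coeff G w (int q - e - 2))"
proof -
  have "laurent_residue G w e (pderiv p)
      = (\<Sum>q\<le>degree p. of_nat (Suc q) * coeff p (Suc q) * taylor_coeff G w (int q - e - 1))"
    using degree_pderiv[of p] by (simp add: laurent_residue_eq_sum[where B = "degree p"] coeff_pderiv)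
  also have "\<dots> = (\<Sum>q\<le>Suc (degree p). of_nat q * coeff p q * taylor_coeff G w (int q - e - 2))"
    by (subst sum.atMost_Suc_shift) (simp add: algebra_simps)
  also have "\<dots> = (\<Sum>q\<le>degree p. of_nat q * coeff p q * taylor_coeff G w (int q - e - 2))"
    by (simp add: coeff_eq_0)
  finally show ?thesis .
qed

lemma residue_laurent_poly:
  assumes G: "G holomorphic_on UNIV"
  shows "residue (\<lambda>z. (z - w) powi e * G z * poly p (1 / (z - w))) w = laurent_residue G w e p"
proof (induction p arbitrary: e)
  case 0
  then show ?case by (simp add: residue_const)
next
  case (pCons a p)
  have hol_pole: "(\<lambda>z. (z - w) powi e * G z) holomorphic_on UNIV - {w}"
    and hol_rest: "(\<lambda>z. (z - w) powi (e - 1) * G z * poly p (1 / (z - w))) holomorphic_on UNIV - {w}"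
    by (intro holomorphic_intros holomorphic_on_subset[OF G]; auto)+
  have "residue (\<lambda>z. (z - w) powi e * G z * poly (pCons a p) (1 / (z - w))) w
      = residue (\<lambda>z. a * ((z - w) powi e * G z) + (z - w) powi (e - 1) * G z * poly p (1 / (z - w))) w"
  proof (rule residue_cong)
    show "\<forall>\<^sub>F z in at w. (z - w) powi e * G z * poly (pCons a p) (1 / (z - w))
        = a * ((z - w) powi e * G z) + (z - w) powi (e - 1) * G z * poly p (1 / (z - w))"
      unfolding eventually_at_filter
    proof (intro always_eventually allI impI)
      fix z assume "z \<noteq> w"
      then have "(z - w) powi (e - 1) = (z - w) powi e * (1 / (z - w))"
        by (simp add: power_int_diff)
      then show "(z - w) powi e * G z * poly (pCons a p) (1 / (z - w))
          = a * ((z - w) powi e * G z) + (z - w) powi (e - 1) * G z * poly p (1 / (z - w))"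
        by (simp add: algebra_simps)
    qed
  qed simp
  also have "\<dots> = a * residue (\<lambda>z. (z - w) powi e * G z) w + laurent_residue G w (e - 1) p"
    using hol_pole hol_rest
    by (simp add: residue_add[OF open_UNIV] residue_lmul[OF open_UNIV] holomorphic_on_mult pCons.IH)
  finally show ?case by (simp add: residue_power_int_mult[OF G] laurent_residue_pCons)
qed

lemma has_field_derivative_laurent_residue:
  assumes G: "G holomorphic_on UNIV"
    and P: "\<And>q. ((\<lambda>v. coeff (P v) q) has_field_derivative coeff D q) (at w)"
    and deg_P: "\<And>v. degree (P v) \<le> B" and deg_D: "degree D \<le> B"
  shows "((\<lambda>v. laurent_residue G v e (P v)) has_field_derivative
           laurent_residue G w e D + laurent_residue G w (e - 2) (pderiv (P w))
           - of_int e * laurent_residue G w (e - 1) (P w)) (at w)"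
proof -
  let ?T = "taylor_coeff G w"
  have "((\<lambda>v. \<Sum>q\<le>B. coeff (P v) q * taylor_coeff G v (int q - e - 1)) has_field_derivative
      (\<Sum>q\<le>B. coeff D q * ?T (int q - e - 1)
              + coeff (P w) q * (of_int (int q - e) * ?T (int q - e)))) (at w)"
  proof (rule DERIV_sum)
    fix q
    show "((\<lambda>v. coeff (P v) q * taylor_coeff G v (int q - e - 1)) has_field_derivative
        coeff D q * ?T (int q - e - 1) + coeff (P w) q * (of_int (int q - e) * ?T (int q - e))) (at w)"
      using DERIV_mult[OF P has_field_derivative_taylor_coeff[OF G, of "int q - e - 1" w]]
      by (simp add: algebra_simps)
  qed
  moreover have "laurent_residue G w (e - 2) (pderiv (P w))
      = (\<Sum>q\<le>B. of_nat q * coeff (P w) q * ?T (int q - e))"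
    using deg_P[of w]
    by (simp add: laurent_residue_pderiv, intro sum.mono_neutral_left) (auto simp: coeff_eq_0)
  ultimately have "((\<lambda>v. \<Sum>q\<le>B. coeff (P v) q * taylor_coeff G v (int q - e - 1)) has_field_derivative
      laurent_residue G w e D + laurent_residue G w (e - 2) (pderiv (P w))
      - of_int e * laurent_residue G w (e - 1) (P w)) (at w)"
    using deg_P[of w] deg_D
    by (simp add: laurent_residue_eq_sum[where B = B] sum_distrib_left algebra_simps
        flip: sum.distrib sum_subtractf)
  then show ?thesis
    using deg_P by (simp add: laurent_residue_eq_sum[where B = B])
qed

fun contraction_poly :: "(nat \<Rightarrow> complex \<Rightarrow> complex) \<Rightarrow> vec \<Rightarrow> dpoly \<Rightarrow> complex \<Rightarrow> complex poly" where
  "contraction_poly f s (DConst c) w = [:c:]"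
| "contraction_poly f s (DVar i j) w = [:(deriv ^^ Suc j) (f i) w:] - monom (fact j * s i) (Suc j)"
| "contraction_poly f s (DAdd p q) w = contraction_poly f s p w + contraction_poly f s q w"
| "contraction_poly f s (DMul p q) w = contraction_poly f s p w * contraction_poly f s q w"

(* The derivative in w of each coefficient (in t = 1/(z - w)) of contraction_poly f s X w;
  not to be confused with pderiv, which differentiates in t. *)
fun contraction_poly_deriv :: "(nat \<Rightarrow> complex \<Rightarrow> complex) \<Rightarrow> vec \<Rightarrow> dpoly \<Rightarrow> complex \<Rightarrow> complex poly" where
  "contraction_poly_deriv f s (DConst c) w = 0"
| "contraction_poly_deriv f s (DVar i j) w = [:(deriv ^^ Suc (Suc j)) (f i) w:]"
| "contraction_poly_deriv f s (DAdd p q) w =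
     contraction_poly_deriv f s p w + contraction_poly_deriv f s q w"
| "contraction_poly_deriv f s (DMul p q) w =
     contraction_poly_deriv f s p w * contraction_poly f s q w
     + contraction_poly f s p w * contraction_poly_deriv f s q w"

fun pole_bound :: "dpoly \<Rightarrow> nat" where
  "pole_bound (DConst c) = 0"
| "pole_bound (DVar i j) = Suc j"
| "pole_bound (DAdd p q) = max (pole_bound p) (pole_bound q)"
| "pole_bound (DMul p q) = pole_bound p + pole_bound q"

lemma deval_eq_poly_contraction_poly:
  assumes "z \<noteq> w"
  shows "deval (\<lambda>i j. (deriv ^^ Suc j) (f i) w - fact j * s i / (z - w) ^ Suc j) X
       = poly (contraction_poly f s X w) (1 / (z - w))"
  by (induction X) (simp_all add: poly_monom power_one_over)

lemma degree_contraction_poly_le: "degree (contraction_poly f s X w) \<le> pole_bound X"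
proof (induction X)
  case (DVar i j)
  show ?case
    by (simp add: degree_diff_le degree_monom_le)
next
  case (DAdd X1 X2)
  then show ?case by (auto intro: order.trans[OF degree_add_le_max] max.mono)
next
  case (DMul X1 X2)
  then show ?case by (auto intro: order.trans[OF degree_mult_le] add_mono)
qed simp

lemma has_field_derivative_coeff_contraction_poly:
  assumes f: "\<forall>i. f i holomorphic_on UNIV"
  shows "((\<lambda>v. coeff (contraction_poly f s X v) q) has_field_derivative
           coeff (contraction_poly_deriv f s X w) q) (at w)"
proof (induction X arbitrary: q)
  case (DVar i j)
  show ?case
    using has_field_derivative_higher_deriv[OF f[rule_format, of i] open_UNIV UNIV_I,
        where n = "Suc j" and x = w]
    by (cases q) (simp_all add: coeff_monom)
next
  case (DAdd X1 X2)
  then show ?case by (auto intro!: derivative_eq_intros)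
next
  case (DMul X1 X2)
  show ?case
    unfolding contraction_poly.simps contraction_poly_deriv.simps coeff_add coeff_mult
    by (rule DERIV_cong[OF DERIV_sum[OF DERIV_mult[OF DMul.IH]]]) (simp add: sum.distrib algebra_simps)
qed simp

lemma degree_contraction_poly_deriv_le:
  assumes f: "\<forall>i. f i holomorphic_on UNIV" and deg: "\<And>v. degree (contraction_poly f s X v) \<le> B"
  shows "degree (contraction_poly_deriv f s X w) \<le> B"
proof (rule degree_le, intro allI impI)
  fix q assume "B < q"
  then have "coeff (contraction_poly f s X v) q = 0" for v
    using deg by (meson coeff_eq_0 le_less_trans)
  then have "((\<lambda>v. coeff (contraction_poly f s X v) q) has_field_derivative 0) (at w)"
    by simp
  then show "coeff (contraction_poly_deriv f s X w) q = 0"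
    using DERIV_unique has_field_derivative_coeff_contraction_poly[OF f] by blast
qed

lemma contraction_poly_dderiv:
  "contraction_poly f s (dderiv X) w
     = contraction_poly_deriv f s X w + pCons 0 (pCons 0 (pderiv (contraction_poly f s X w)))"
proof (induction X)
  case (DVar i j)
  have "pderiv (contraction_poly f s (DVar i j) w) = - monom (fact (Suc j) * s i) j"
    by (simp add: pderiv_diff pderiv_monom algebra_simps)
  then show ?case by (simp add: monom_Suc)
next
  case (DAdd X1 X2)
  then show ?case by (simp add: pderiv_add)
next
  case (DMul X1 X2)
  then show ?case by (simp add: pderiv_mult algebra_simps)
qed (simp add: pderiv_pCons)

definition wick_residue ::
    "(complex \<Rightarrow> complex) \<Rightarrow> (nat \<Rightarrow> complex \<Rightarrow> complex) \<Rightarrow> vec \<Rightarrow> int \<Rightarrow> dpoly \<Rightarrow> complex \<Rightarrow> complex" where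
  "wick_residue G f s e X w = laurent_residue G w e (contraction_poly f s X w)"

lemma wick_residue_dderiv:
  assumes f: "\<forall>i. f i holomorphic_on UNIV" and G: "G holomorphic_on UNIV"
  shows "wick_residue G f s e (dderiv X) w
       = deriv (wick_residue G f s e X) w + of_int e * wick_residue G f s (e - 1) X w"
proof -
  have "(wick_residue G f s e X has_field_derivative
          laurent_residue G w e (contraction_poly_deriv f s X w)
          + laurent_residue G w (e - 2) (pderiv (contraction_poly f s X w))
          - of_int e * wick_residue G f s (e - 1) X w) (at w)"
    unfolding wick_residue_def[abs_def]
    by (rule has_field_derivative_laurent_residue[OF G has_field_derivative_coeff_contraction_poly[OF f]
          degree_contraction_poly_le degree_contraction_poly_deriv_le[OF f degree_contraction_poly_le]])
  then show ?thesis
    by (simp add: DERIV_imp_deriv wick_residue_def contraction_poly_dderiv laurent_residue_add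
        laurent_residue_pCons)
qed

definition pscr_step :: "complex \<Rightarrow> dpoly \<Rightarrow> dpoly \<Rightarrow> dpoly" where
  "pscr_step \<kappa> U X = DAdd (DMul (DConst \<kappa>) (dderiv X)) (DMul U X)"

lemma wick_residue_pscr_step:
  assumes f: "\<forall>i. f i holomorphic_on UNIV" and G: "G holomorphic_on UNIV"
    and U: "contraction_poly f s U w = [:\<alpha>, - \<beta>:]"
  shows "wick_residue G f s e (pscr_step \<kappa> U X) w
       = \<kappa> * deriv (wick_residue G f s e X) w + \<alpha> * wick_residue G f s e X w
         + (\<kappa> * of_int e - \<beta>) * wick_residue G f s (e - 1) X w"
proof -
  have "wick_residue G f s e (pscr_step \<kappa> U X) w
      = \<kappa> * wick_residue G f s e (dderiv X) w + \<alpha> * wick_residue G f s e X w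
        - \<beta> * wick_residue G f s (e - 1) X w"
    by (simp add: wick_residue_def pscr_step_def U laurent_residue_add laurent_residue_smult
        laurent_residue_minus laurent_residue_pCons)
  then show ?thesis
    by (simp add: wick_residue_dderiv[OF f G] algebra_simps)
qed

definition jet_pairing :: "nat \<Rightarrow> vec \<Rightarrow> (nat \<Rightarrow> complex \<Rightarrow> complex) \<Rightarrow> complex \<Rightarrow> complex" where
  "jet_pairing N u f w = (\<Sum>i\<le>N. u i * deriv (f i) w)"

lemma jet_pairing_add: "jet_pairing N (\<lambda>i. u i + v i) f w = jet_pairing N u f w + jet_pairing N v f w"
  by (simp add: jet_pairing_def distrib_right sum.distrib)

lemma bil_add_left: "bil N (\<lambda>i. u i + v i) x = bil N u x + bil N v x"
  by (simp add: bil_def distrib_right sum.distrib)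

lemma bil_commute: "bil N u v = bil N v u"
  by (simp add: bil_def mult.commute)

lemma contraction_poly_dsum:
  "contraction_poly f s (dsum ps) w = (\<Sum>p\<leftarrow>ps. contraction_poly f s p w)"
  by (induction ps) (simp_all add: dsum_def)

lemma contraction_poly_current:
  "contraction_poly f s (current N u) w = [:jet_pairing N u f w, - bil N u s:]"
proof -
  have "contraction_poly f s (current N u) w
      = (\<Sum>i\<le>N. contraction_poly f s (DMul (DConst (u i)) (DVar i 0)) w)"
    unfolding current_def contraction_poly_dsum map_map o_def
    by (simp only: flip: sum_set_upt_conv_sum_list_nat)
       (simp only: set_upt atLeast0LessThan lessThan_Suc_atMost)
  also have "\<dots> = [:jet_pairing N u f w, - bil N u s:]"
    by (rule poly_eqI)
       (simp add: coeff_sum jet_pairing_def bil_def sum_negf coeff_pCons split: nat.split)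
  finally show ?thesis .
qed

definition chain_vec :: "vec \<Rightarrow> (int \<Rightarrow> vec) \<Rightarrow> nat \<Rightarrow> vec" where
  "chain_vec psip a l i = psip i + (\<Sum>r=1..l. a (int r) i)"

lemma chain_vec_0 [simp]: "chain_vec psip a 0 = psip"
  by (simp add: chain_vec_def[abs_def])

lemma chain_vec_Suc: "chain_vec psip a (Suc l) = (\<lambda>i. chain_vec psip a l i + a (int (Suc l)) i)"
  by (simp add: chain_vec_def[abs_def] add.assoc)

definition chain_current :: "nat \<Rightarrow> vec \<Rightarrow> (int \<Rightarrow> vec) \<Rightarrow> nat \<Rightarrow> dpoly" where
  "chain_current N psip a l = DAdd (current N psip) (dsum (map (\<lambda>r. current N (a (int r))) [1..<Suc l]))"

lemma contraction_poly_chain_current: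
  "contraction_poly f s (chain_current N psip a l) w
     = [:jet_pairing N (chain_vec psip a l) f w, - bil N (chain_vec psip a l) s:]"
proof (induction l)
  case 0
  then show ?case by (simp add: chain_current_def dsum_def contraction_poly_current)
next
  case (Suc l)
  have "contraction_poly f s (chain_current N psip a (Suc l)) w
      = contraction_poly f s (chain_current N psip a l) w
        + contraction_poly f s (current N (a (int (Suc l)))) w"
    by (simp add: chain_current_def contraction_poly_dsum)
  then show ?case
    by (simp add: Suc.IH contraction_poly_current chain_vec_Suc jet_pairing_add bil_add_left)
qed

fun pscr_chain :: "nat \<Rightarrow> vec \<Rightarrow> (int \<Rightarrow> vec) \<Rightarrow> complex \<Rightarrow> nat \<Rightarrow> dpoly" where
  "pscr_chain N psip a \<kappa> 0 = current N psip"
| "pscr_chain N psip a \<kappa> (Suc l) =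
     pscr_step \<kappa> (chain_current N psip a (Suc l)) (pscr_chain N psip a \<kappa> l)"

lemma Pscr_eq_pscr_chain:
  "Pscr N psip a m (m + 1 + l) k = pscr_chain N psip a (k + of_nat (m + 1 + l) - 1) l"
proof (induction l arbitrary: k)
  case (Suc l)
  have "k + of_nat (Suc (m + 1 + l)) - 1 = (k + 1) + of_nat (m + 1 + l) - 1"
    by simp
  moreover have "[1..<Suc (m + 1 + l) - m] = [1..<Suc (Suc l)]"
    by simp
  ultimately show ?case
    by (simp only: add_Suc_right Pscr.simps Suc.IH) (simp add: pscr_step_def chain_current_def)
qed simp

definition vertex_exp :: "nat \<Rightarrow> vec \<Rightarrow> (nat \<Rightarrow> complex \<Rightarrow> complex) \<Rightarrow> complex \<Rightarrow> complex" where
  "vertex_exp N s f z = exp (\<Sum>i\<le>N. s i * f i z)"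

lemma holomorphic_vertex_exp:
  "\<forall>i. f i holomorphic_on UNIV \<Longrightarrow> vertex_exp N s f holomorphic_on UNIV"
  unfolding vertex_exp_def[abs_def] by (intro holomorphic_intros) auto

lemma has_field_derivative_vertex_exp:
  assumes "\<forall>i. f i holomorphic_on UNIV"
  shows "(vertex_exp N s f has_field_derivative jet_pairing N s f w * vertex_exp N s f w) (at w)"
proof -
  have "((\<lambda>z. \<Sum>i\<le>N. s i * f i z) has_field_derivative jet_pairing N s f w) (at w)"
    unfolding jet_pairing_def
    by (intro DERIV_sum DERIV_cmult has_field_derivative_higher_deriv[where n = 0, simplified])
       (use assms in auto)
  from DERIV_chain2[OF DERIV_exp this] show ?thesis
    by (simp add: vertex_exp_def[abs_def] mult.commute)
qed

lemma residue_screening_ope: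
  assumes f: "\<forall>i. f i holomorphic_on UNIV"
  shows "residue (\<lambda>z. (z - w) powi e * exp (\<Sum>i\<le>N. s i * f i z + of_int p * xi i * f i w)
           * deval (\<lambda>i j. (deriv ^^ Suc j) (f i) w - fact j * s i / (z - w) ^ Suc j) (DMul (DConst c) X)) w
       = c * exp (\<Sum>i\<le>N. of_int p * xi i * f i w) * wick_residue (vertex_exp N s f) f s e X w"
proof -
  define C where "C = c * exp (\<Sum>i\<le>N. of_int p * xi i * f i w)"
  have "\<forall>\<^sub>F z in at w. (z - w) powi e * exp (\<Sum>i\<le>N. s i * f i z + of_int p * xi i * f i w)
        * deval (\<lambda>i j. (deriv ^^ Suc j) (f i) w - fact j * s i / (z - w) ^ Suc j) (DMul (DConst c) X)
      = C * ((z - w) powi e * vertex_exp N s f z * poly (contraction_poly f s X w) (1 / (z - w)))"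
    unfolding eventually_at_filter
  proof (intro always_eventually allI impI)
    fix z assume "z \<noteq> w"
    from deval_eq_poly_contraction_poly[OF this, of f s X]
    show "(z - w) powi e * exp (\<Sum>i\<le>N. s i * f i z + of_int p * xi i * f i w)
        * deval (\<lambda>i j. (deriv ^^ Suc j) (f i) w - fact j * s i / (z - w) ^ Suc j) (DMul (DConst c) X)
      = C * ((z - w) powi e * vertex_exp N s f z * poly (contraction_poly f s X w) (1 / (z - w)))"
      by (simp add: C_def vertex_exp_def sum.distrib exp_add)
  qed
  then have "residue (\<lambda>z. (z - w) powi e * exp (\<Sum>i\<le>N. s i * f i z + of_int p * xi i * f i w)
        * deval (\<lambda>i j. (deriv ^^ Suc j) (f i) w - fact j * s i / (z - w) ^ Suc j) (DMul (DConst c) X)) w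
      = residue (\<lambda>z. C * ((z - w) powi e * vertex_exp N s f z
                              * poly (contraction_poly f s X w) (1 / (z - w)))) w"
    by (rule residue_cong) simp
  also have "\<dots> = C * wick_residue (vertex_exp N s f) f s e X w"
  proof -
    have "(\<lambda>z. (z - w) powi e * vertex_exp N s f z * poly (contraction_poly f s X w) (1 / (z - w)))
        holomorphic_on UNIV - {w}"
      by (intro holomorphic_intros holomorphic_on_subset[OF holomorphic_vertex_exp[OF f]]) auto
    then show ?thesis
      by (simp add: residue_lmul[OF open_UNIV] residue_laurent_poly[OF holomorphic_vertex_exp[OF f]]
          wick_residue_def)
  qed
  finally show ?thesis by (simp add: C_def)
qed

lemma commutes_if_wick_residue_vanishes:
  assumes "of_int p * bil N s xi = of_int e"
    and "\<And>f w. \<forall>i. f i holomorphic_on UNIV \<Longrightarrow> wick_residue (vertex_exp N s f) f s e X w = 0"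
  shows "commutes N xi s (DMul (DConst c) X) p"
  unfolding commutes_def
  using assms
  by (intro exI[of _ e] conjI allI impI) (simp_all only: residue_screening_ope mult_zero_right simp_thms)

lemma contraction_poly_pscr_step_of_constant:
  assumes f: "\<forall>i. f i holomorphic_on UNIV"
    and Y: "\<And>v. degree (contraction_poly f s Y v) = 0"
    and U: "contraction_poly f s U w = [:\<alpha>, - \<beta>:]"
  shows "contraction_poly f s (pscr_step \<kappa> U Y) w
       = [:\<kappa> * coeff (contraction_poly_deriv f s Y w) 0 + \<alpha> * coeff (contraction_poly f s Y w) 0,
           - \<beta> * coeff (contraction_poly f s Y w) 0:]"
proof -
  obtain c where c: "contraction_poly f s Y w = [:c:]"
    using Y[of w] degree_eq_zeroE by blast
  have "degree (contraction_poly_deriv f s Y w) = 0"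
    using degree_contraction_poly_deriv_le[OF f, of s Y 0 w] Y by simp
  then obtain d where d: "contraction_poly_deriv f s Y w = [:d:]"
    using degree_eq_zeroE by blast
  show ?thesis
    by (simp add: pscr_step_def contraction_poly_dderiv U c d)
qed

locale pscr_residues =
  fixes N :: nat and f :: "nat \<Rightarrow> complex \<Rightarrow> complex" and s psip :: vec
    and a :: "int \<Rightarrow> vec" and \<kappa> :: complex
  assumes entire: "\<forall>i. f i holomorphic_on UNIV"
begin

abbreviation "G \<equiv> vertex_exp N s f"
abbreviation "X l \<equiv> pscr_chain N psip a \<kappa> l"
abbreviation "\<rho> e l \<equiv> wick_residue G f s e (X l)"
abbreviation "\<alpha> l \<equiv> jet_pairing N (chain_vec psip a l) f"
abbreviation "\<beta> l \<equiv> bil N (chain_vec psip a l) s"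

lemma holomorphic_G: "G holomorphic_on UNIV"
  by (rule holomorphic_vertex_exp[OF entire])

lemma deriv_G: "deriv G w = jet_pairing N s f w * G w"
  by (simp add: DERIV_imp_deriv has_field_derivative_vertex_exp[OF entire])

lemma \<rho>_Suc:
  "\<rho> e (Suc l) w = \<kappa> * deriv (\<rho> e l) w + \<alpha> (Suc l) w * \<rho> e l w
     + (\<kappa> * of_int e - \<beta> (Suc l)) * \<rho> (e - 1) l w"
  by (simp add: wick_residue_pscr_step[OF entire holomorphic_G contraction_poly_chain_current])

lemma \<rho>_0: "\<rho> e 0 w = \<alpha> 0 w * taylor_coeff G w (- e - 1) - \<beta> 0 * taylor_coeff G w (- e)"
  by (simp add: wick_residue_def contraction_poly_current laurent_residue_pCons)

lemma \<rho>_vanishing_propagates: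
  assumes "\<And>w. \<rho> e l\<^sub>0 w = 0" and "l\<^sub>0 \<le> L"
    and "\<And>l. l\<^sub>0 \<le> l \<Longrightarrow> l < L \<Longrightarrow> \<beta> (Suc l) = \<kappa> * of_int e"
  shows "\<rho> e L w = 0"
proof -
  have "\<forall>w. \<rho> e L w = 0"
    using \<open>l\<^sub>0 \<le> L\<close>
  proof (induction L rule: dec_induct)
    case base
    then show ?case using assms(1) by blast
  next
    case (step l)
    then have "\<rho> e l = (\<lambda>_. 0)" by auto
    then show ?case using assms(3)[OF step(1,2)] by (simp only: \<rho>_Suc) simp
  qed
  then show ?thesis by blast
qed

lemma degree_contraction_poly_chain_eq_0:
  assumes "\<And>l'. l' \<le> l \<Longrightarrow> \<beta> l' = 0"
  shows "degree (contraction_poly f s (X l) w) = 0"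
  using assms
proof (induction l arbitrary: w)
  case 0
  then show ?case by (simp add: contraction_poly_current)
next
  case (Suc l)
  have "\<beta> (Suc l) = 0" by (rule Suc.prems) simp
  with Suc show ?case
    by (simp add: contraction_poly_pscr_step_of_constant[OF entire _ contraction_poly_chain_current])
qed

lemma contraction_poly_chain_first_pole:
  fixes K :: complex
  assumes "\<And>l. l < j \<Longrightarrow> \<beta> l = 0" and "\<beta> j = - K"
  obtains Y Y' where "\<And>w. (Y has_field_derivative Y' w) (at w)"
    and "\<And>w. contraction_poly f s (X j) w = [:\<kappa> * Y' w + \<alpha> j w * Y w, K * Y w:]"
proof (cases j)
  case 0
  then show ?thesis
    using that[of "\<lambda>_. 1" "\<lambda>_. 0"] assms(2) by (simp add: contraction_poly_current)
next
  case (Suc l)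
  have const: "degree (contraction_poly f s (X l) v) = 0" for v
    by (rule degree_contraction_poly_chain_eq_0) (use assms(1) Suc in auto)
  show ?thesis
  proof (rule that)
    show "((\<lambda>v. coeff (contraction_poly f s (X l) v) 0) has_field_derivative
        coeff (contraction_poly_deriv f s (X l) w) 0) (at w)" for w
      by (rule has_field_derivative_coeff_contraction_poly[OF entire])
    show "contraction_poly f s (X j) w
        = [:\<kappa> * coeff (contraction_poly_deriv f s (X l) w) 0
              + \<alpha> j w * coeff (contraction_poly f s (X l) w) 0,
            K * coeff (contraction_poly f s (X l) w) 0:]" for w
      using Suc assms(2)
        contraction_poly_pscr_step_of_constant[OF entire const contraction_poly_chain_current]
      by simp
  qed
qed

lemma \<rho>_vanishes_after_first_pole:
  fixes K :: complex
  assumes Y: "\<And>w. (Y has_field_derivative Y' w) (at w)"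
    and X: "\<And>w. contraction_poly f s (X j) w = [:\<kappa> * Y' w + \<alpha> j w * Y w, K * Y w:]"
    and s: "s = a (int (Suc j))" and \<beta>: "\<beta> (Suc j) = K" and \<kappa>: "\<kappa> = K - 1"
  shows "\<rho> 0 (Suc j) w = 0"
proof -
  let ?\<sigma> = "jet_pairing N s f"
  have \<rho>_0_j: "\<rho> 0 j = (\<lambda>w. K * Y w * G w)"
    by (simp add: fun_eq_iff wick_residue_def X laurent_residue_pCons)
  have \<rho>_minus_j: "\<rho> (-1) j w = (\<kappa> * Y' w + \<alpha> j w * Y w) * G w + K * Y w * (?\<sigma> w * G w)"
    by (simp add: wick_residue_def X laurent_residue_pCons deriv_G)
  have "deriv (\<lambda>w. K * Y w * G w) w = K * (Y' w * G w + Y w * (?\<sigma> w * G w))"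
    by (rule DERIV_imp_deriv)
       (use DERIV_cmult[OF DERIV_mult[OF Y has_field_derivative_vertex_exp[OF entire]], of K] in
        \<open>simp add: algebra_simps\<close>)
  moreover have "\<alpha> (Suc j) w = \<alpha> j w + ?\<sigma> w"
    by (simp add: s chain_vec_Suc jet_pairing_add)
  ultimately have "\<rho> 0 (Suc j) w = \<kappa> * (K * (Y' w * G w + Y w * (?\<sigma> w * G w)))
      + (\<alpha> j w + ?\<sigma> w) * (K * Y w * G w)
      - K * ((\<kappa> * Y' w + \<alpha> j w * Y w) * G w + K * Y w * (?\<sigma> w * G w))"
    unfolding \<rho>_Suc \<rho>_0_j \<beta> by (simp add: \<rho>_minus_j)
  (* the right-hand side is K Y sigma G (kappa + 1 - K) *)
  then show ?thesis
    by (simp add: \<kappa> algebra_simps)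
qed

lemma \<rho>_vanishes_psip:
  assumes s: "s = psip" and \<beta>: "\<And>l. l \<le> L \<Longrightarrow> \<beta> l = (if l = 0 then 1 else - \<kappa>)"
  shows "\<rho> (-1) L w = 0"
proof (rule \<rho>_vanishing_propagates[of _ 0])
  show "\<rho> (-1) 0 w = 0" for w
    using \<beta>[of 0] deriv_G[of w] unfolding \<rho>_0 by (simp add: s)
  show "\<beta> (Suc l) = \<kappa> * of_int (-1)" if "l < L" for l
    using \<beta>[of "Suc l"] that by simp
qed simp

lemma \<rho>_vanishes_nonneg:
  assumes "0 \<le> e" and \<beta>: "\<And>l. l \<le> L \<Longrightarrow> \<beta> l = \<kappa> * of_int e"
  shows "\<rho> e L w = 0"
proof (rule \<rho>_vanishing_propagates[of _ 0])
  show "\<rho> e 0 w = 0" for w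
    using \<open>0 \<le> e\<close> \<beta>[of 0] unfolding \<rho>_0 by (cases "e = 0") simp_all
  show "\<beta> (Suc l) = \<kappa> * of_int e" if "l < L" for l
    using \<beta>[of "Suc l"] that by simp
qed simp

lemma \<rho>_vanishes_a_pos:
  fixes K :: complex
  assumes s: "s = a (int j)" and j: "1 \<le> j" "j \<le> L" and \<kappa>: "\<kappa> = K - 1"
    and \<beta>: "\<And>l. l \<le> L \<Longrightarrow> \<beta> l = (if Suc l = j then - K else if l = j then K else 0)"
  shows "\<rho> 0 L w = 0"
proof -
  obtain i where j_Suc: "j = Suc i" using j(1) by (cases j) auto
  obtain Y Y' where Y: "\<And>w. (Y has_field_derivative Y' w) (at w)"
    and X: "\<And>w. contraction_poly f s (X i) w = [:\<kappa> * Y' w + \<alpha> i w * Y w, K * Y w:]"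
    by (rule contraction_poly_chain_first_pole[of i K]) (use \<beta> j j_Suc in auto)
  have "\<rho> 0 j w = 0" for w
    unfolding j_Suc by (rule \<rho>_vanishes_after_first_pole[OF Y X]) (use s \<beta>[of j] \<kappa> j j_Suc in auto)
  then show ?thesis
    by (rule \<rho>_vanishing_propagates) (use j \<beta> in auto)
qed

end

lemma bil_chain_vec_Suc:
  "bil N (chain_vec psip a (Suc l)) x = bil N (chain_vec psip a l) x + bil N (a (int (Suc l))) x"
  by (simp add: chain_vec_Suc bil_add_left)

lemma gram_ok_pos_index:
  assumes g: "gram_ok n m K a psip psim xi" and r: "1 \<le> r" "r \<le> n - m - 1"
  shows "bil n (a (int r)) psip = (if r = 1 then - K else 0)"
    and "bil n (a (int r)) xi = 0"
    and "1 \<le> m \<Longrightarrow> bil n (a (int r)) psim = 0"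
    and "1 \<le> i \<Longrightarrow> i \<le> n - m - 1 \<Longrightarrow>
           bil n (a (int r)) (a (int i))
             = (if r = i then 2 * K else if r = Suc i \<or> Suc r = i then - K else 0)"
    and "1 \<le> i \<Longrightarrow> i \<le> m - 1 \<Longrightarrow> bil n (a (int r)) (a (- int i)) = 0"
  using assms unfolding gram_ok_def Let_def by (auto simp: abs_if)

lemma commutes_screening_a_pos:
  assumes g: "gram_ok n m K a psip psim xi" and i: "1 \<le> i" "i \<le> n - m - 1"
  shows "commutes n xi (a (int i)) (DMul (DConst c) (pscr_chain n psip a (K - 1) (n - m - 1))) (-1)"
proof (rule commutes_if_wick_residue_vanishes[where e = 0])
  show "of_int (-1) * bil n (a (int i)) xi = of_int 0"
    using gram_ok_pos_index(2)[OF g i] by simp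
  have \<beta>: "bil n (chain_vec psip a l) (a (int i)) = (if Suc l = i then - K else if l = i then K else 0)"
    if "l \<le> n - m - 1" for l
    using that
  proof (induction l)
    case 0
    then show ?case using gram_ok_pos_index(1)[OF g i] i by (simp add: bil_commute)
  next
    case (Suc l)
    then show ?case
      using gram_ok_pos_index(4)[OF g _ Suc.prems i] by (auto simp: bil_chain_vec_Suc)
  qed
  fix f :: "nat \<Rightarrow> complex \<Rightarrow> complex" and w
  assume "\<forall>i. f i holomorphic_on UNIV"
  then interpret pscr_residues n f "a (int i)" psip a "K - 1"
    by unfold_locales
  show "\<rho> 0 (n - m - 1) w = 0"
    by (rule \<rho>_vanishes_a_pos[where K = K]) (use i \<beta> in auto)
qed

lemma commutes_screening_psip:
  assumes g: "gram_ok n m K a psip psim xi" and "m < n"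
  shows "commutes n xi psip (DMul (DConst c) (pscr_chain n psip a (K - 1) (n - m - 1))) (-1)"
proof (rule commutes_if_wick_residue_vanishes[where e = "-1"])
  have psip: "bil n psip psip = 1" "bil n psip xi = 1"
    using g \<open>m < n\<close> unfolding gram_ok_def Let_def by auto
  then show "of_int (-1) * bil n psip xi = of_int (-1)"
    by simp
  have \<beta>: "bil n (chain_vec psip a l) psip = (if l = 0 then 1 else 1 - K)" if "l \<le> n - m - 1" for l
    using that
  proof (induction l)
    case (Suc l)
    then show ?case
      using gram_ok_pos_index(1)[OF g _ Suc.prems] by (auto simp: bil_chain_vec_Suc)
  qed (simp add: psip)
  fix f :: "nat \<Rightarrow> complex \<Rightarrow> complex" and w
  assume "\<forall>i. f i holomorphic_on UNIV"
  then interpret pscr_residues n f psip psip a "K - 1"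
    by unfold_locales
  show "\<rho> (-1) (n - m - 1) w = 0"
    by (rule \<rho>_vanishes_psip) (use \<beta> in auto)
qed

lemma commutes_screening_psim:
  assumes g: "gram_ok n m K a psip psim xi" and "m < n" and "1 \<le> m"
  shows "commutes n xi psim (DMul (DConst c) (pscr_chain n psip a (K - 1) (n - m - 1))) (-1)"
proof (rule commutes_if_wick_residue_vanishes[where e = 1])
  have psim: "bil n psip psim = K - 1" "bil n psim xi = -1"
    using g \<open>m < n\<close> \<open>1 \<le> m\<close> unfolding gram_ok_def Let_def by auto
  then show "of_int (-1) * bil n psim xi = of_int 1"
    by simp
  have \<beta>: "bil n (chain_vec psip a l) psim = K - 1" if "l \<le> n - m - 1" for l
    using that
  proof (induction l)
    case (Suc l)
    then show ?case
      using gram_ok_pos_index(3)[OF g _ Suc.prems \<open>1 \<le> m\<close>] by (auto simp: bil_chain_vec_Suc)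
  qed (simp add: psim)
  fix f :: "nat \<Rightarrow> complex \<Rightarrow> complex" and w
  assume "\<forall>i. f i holomorphic_on UNIV"
  then interpret pscr_residues n f psim psip a "K - 1"
    by unfold_locales
  show "\<rho> 1 (n - m - 1) w = 0"
    by (rule \<rho>_vanishes_nonneg) (use \<beta> in auto)
qed

lemma commutes_screening_a_neg:
  assumes g: "gram_ok n m K a psip psim xi" and "m < n" and i: "1 \<le> i" "i \<le> m - 1"
  shows "commutes n xi (a (- int i)) (DMul (DConst c) (pscr_chain n psip a (K - 1) (n - m - 1))) (-1)"
proof (rule commutes_if_wick_residue_vanishes[where e = 0])
  have a_neg: "bil n psip (a (- int i)) = 0" "bil n (a (- int i)) xi = 0"
    using g \<open>m < n\<close> i unfolding gram_ok_def Let_def by (auto simp: bil_commute)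
  then show "of_int (-1) * bil n (a (- int i)) xi = of_int 0"
    by simp
  have \<beta>: "bil n (chain_vec psip a l) (a (- int i)) = 0" if "l \<le> n - m - 1" for l
    using that
  proof (induction l)
    case (Suc l)
    then show ?case
      using gram_ok_pos_index(5)[OF g _ Suc.prems i] by (auto simp: bil_chain_vec_Suc)
  qed (simp add: a_neg)
  fix f :: "nat \<Rightarrow> complex \<Rightarrow> complex" and w
  assume "\<forall>i. f i holomorphic_on UNIV"
  then interpret pscr_residues n f "a (- int i)" psip a "K - 1"
    by unfold_locales
  show "\<rho> 0 (n - m - 1) w = 0"
    by (rule \<rho>_vanishes_nonneg) (use \<beta> in auto)
qed

theorem lemma2p4:
  fixes n m :: nat and k :: complex and a :: "int \<Rightarrow> vec" and psip psim xi :: vec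
  assumes "2 \<le> n" and "m \<le> n" and "m + 1 \<le> n"
    and "k + of_nat n \<noteq> 0"
    and "gram_ok n m (k + of_nat n) a psip psim xi"
  shows "(\<forall>i\<in>{1..n - m - 1}. commutes n xi (a (int i))
             (DMul (DConst ((-1) ^ (m + 1))) (Pscr n psip a m n k)) (-1))
       \<and> commutes n xi psip (DMul (DConst ((-1) ^ (m + 1))) (Pscr n psip a m n k)) (-1)
       \<and> (1 \<le> m \<longrightarrow> commutes n xi psim (DMul (DConst ((-1) ^ (m + 1))) (Pscr n psip a m n k)) (-1))
       \<and> (\<forall>i\<in>{1..m - 1}. commutes n xi (a (- int i))
             (DMul (DConst ((-1) ^ (m + 1))) (Pscr n psip a m n k)) (-1))"
proof -
  (* only m + 1 <= n and the Gram relations are needed *)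
  have "m < n" using assms(3) by simp
  have "Pscr n psip a m n k = pscr_chain n psip a ((k + of_nat n) - 1) (n - m - 1)"
    using Pscr_eq_pscr_chain[of n psip a m "n - m - 1" k] assms(3) by simp
  then show ?thesis
    using commutes_screening_a_pos[OF assms(5)] commutes_screening_psip[OF assms(5) \<open>m < n\<close>]
      commutes_screening_psim[OF assms(5) \<open>m < n\<close>] commutes_screening_a_neg[OF assms(5) \<open>m < n\<close>]
    by auto
qed

end
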